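(* Let $\Bbbk$ be a field, $H$ a Hopf $\Bbbk$-algebra with bijective antipode, $A$ a left $H$-module $\Bbbk$-algebra, and $I$ an $H$-prime ideal of $A$. Then the assignment $P \mapsto \alpha_P$ is a bijection between the set $\{ P \in \operatorname{Spec} A \mid A/P \cong \Bbbk \text{ and } P\!:\!H = I\}$ and the set of embeddings (injective morphisms) $A/I \hookrightarrow H^*$ of $H$-module algebras. Here, for such $P$, $\alpha_P\colon A\to H^*$ is given by $\alpha_P(a)(h) = $ the image of $h.a$ in $A/P=\Bbbk$, and it is regarded as the induced map on $A/I$ (its kernel is $P\!:\!H=I$).
   Context: A left $H$-module algebra is a $\Bbbk$-algebra $A$ with $1$ that is a left $H$-module via $h\otimes a\mapsto h.a$ such that $h.(ab)=(h_1.a)(h_2.b)$ and $h.1=\varepsilon(h)1$; morphisms of $H$-module algebras are algebra maps that are $H$-module maps. An $H$-ideal is a two-sided ideal which is an $H$-submodule; an $H$-ideal $I$ is $H$-prime if $A/I\ne0$ and the product of any two nonzero $H$-ideals of $A/I$ is nonzero. For an ideal $P$, $P\!:\!H=\{a\in A\mid H.a\subseteq P\}$. $H^*=\operatorname{Hom}_\Bbbk(H,\Bbbk)$ is the convolution algebra (product $(fg)(h)=f(h_1)g(h_2)$, unit $\varepsilon$), made into an $H$-module algebra by the hit action $(h \rightharpoonup f)(k) = f(kh)$ for $h,k\in H$, $f \in H^*$. For $P$ with $A/P\cong\Bbbk$, $A/P$ is identified with $\Bbbk$ via the unique algebra isomorphism. *)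

theory Defs
  imports Main "HOL.Vector_Spaces"
begin

text \<open>
  Elements of tensor powers of H are represented by finite lists of pure tensors
  (Sweedler notation); two such lists are equal as tensors iff all products of
  linear functionals take the same value on them (valid over a field).
\<close>

definition k_algebra :: "('k::field \<Rightarrow> 'r::ring_1 \<Rightarrow> 'r) \<Rightarrow> bool" where
  "k_algebra sc \<longleftrightarrow> Vector_Spaces.vector_space sc \<and>
     (\<forall>c x y. sc c (x * y) = sc c x * y \<and> sc c (x * y) = x * sc c y)"

definition lin_fun :: "('k::field \<Rightarrow> 'v::ab_group_add \<Rightarrow> 'v) \<Rightarrow> ('v \<Rightarrow> 'k) \<Rightarrow> bool" where
  "lin_fun sc f \<longleftrightarrow> Vector_Spaces.linear sc ((*)) f"

definition ev2 :: "('h \<Rightarrow> 'k::field) \<Rightarrow> ('h \<Rightarrow> 'k) \<Rightarrow> ('h \<times> 'h) list \<Rightarrow> 'k" where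
  "ev2 f g t = sum_list (map (\<lambda>(x, y). f x * g y) t)"

definition tensor_eq :: "('k::field \<Rightarrow> 'h::ab_group_add \<Rightarrow> 'h) \<Rightarrow> ('h \<times> 'h) list \<Rightarrow> ('h \<times> 'h) list \<Rightarrow> bool" where
  "tensor_eq sc t t' \<longleftrightarrow> (\<forall>f g. lin_fun sc f \<longrightarrow> lin_fun sc g \<longrightarrow> ev2 f g t = ev2 f g t')"

definition hopf_algebra ::
  "('k::field \<Rightarrow> 'h::ring_1 \<Rightarrow> 'h) \<Rightarrow> ('h \<Rightarrow> ('h \<times> 'h) list) \<Rightarrow> ('h \<Rightarrow> 'k) \<Rightarrow> ('h \<Rightarrow> 'h) \<Rightarrow> bool" where
  "hopf_algebra sc \<Delta> \<epsilon> S \<longleftrightarrow>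
     k_algebra sc \<and>
     \<comment> \<open>\<Delta> is linear\<close>
     (\<forall>x y. tensor_eq sc (\<Delta> (x + y)) (\<Delta> x @ \<Delta> y)) \<and>
     (\<forall>c x. tensor_eq sc (\<Delta> (sc c x)) (map (\<lambda>(u, v). (sc c u, v)) (\<Delta> x))) \<and>
     \<comment> \<open>coassociativity\<close>
     (\<forall>h f g l. lin_fun sc f \<longrightarrow> lin_fun sc g \<longrightarrow> lin_fun sc l \<longrightarrow>
        sum_list (map (\<lambda>(x, y). ev2 f g (\<Delta> x) * l y) (\<Delta> h)) =
        sum_list (map (\<lambda>(x, y). f x * ev2 g l (\<Delta> y)) (\<Delta> h))) \<and>
     \<comment> \<open>counit\<close>
     lin_fun sc \<epsilon> \<and>
     (\<forall>h. sum_list (map (\<lambda>(x, y). sc (\<epsilon> x) y) (\<Delta> h)) = h) \<and>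
     (\<forall>h. sum_list (map (\<lambda>(x, y). sc (\<epsilon> y) x) (\<Delta> h)) = h) \<and>
     \<comment> \<open>\<Delta> and \<epsilon> are algebra maps\<close>
     (\<forall>x y. tensor_eq sc (\<Delta> (x * y))
              (concat (map (\<lambda>(a, b). map (\<lambda>(c, d). (a * c, b * d)) (\<Delta> y)) (\<Delta> x)))) \<and>
     tensor_eq sc (\<Delta> 1) [(1, 1)] \<and>
     (\<forall>x y. \<epsilon> (x * y) = \<epsilon> x * \<epsilon> y) \<and> \<epsilon> 1 = 1 \<and>
     \<comment> \<open>antipode\<close>
     Vector_Spaces.linear sc sc S \<and>
     (\<forall>h. sum_list (map (\<lambda>(x, y). S x * y) (\<Delta> h)) = sc (\<epsilon> h) 1) \<and>
     (\<forall>h. sum_list (map (\<lambda>(x, y). x * S y) (\<Delta> h)) = sc (\<epsilon> h) 1)"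

definition module_algebra ::
  "('k::field \<Rightarrow> 'h::ring_1 \<Rightarrow> 'h) \<Rightarrow> ('h \<Rightarrow> ('h \<times> 'h) list) \<Rightarrow> ('h \<Rightarrow> 'k) \<Rightarrow>
   ('k \<Rightarrow> 'a::ring_1 \<Rightarrow> 'a) \<Rightarrow> ('h \<Rightarrow> 'a \<Rightarrow> 'a) \<Rightarrow> bool" where
  "module_algebra scH \<Delta> \<epsilon> scA act \<longleftrightarrow>
     k_algebra scA \<and>
     (\<forall>x y a. act (x + y) a = act x a + act y a) \<and>
     (\<forall>c x a. act (scH c x) a = scA c (act x a)) \<and>
     (\<forall>x a b. act x (a + b) = act x a + act x b) \<and>
     (\<forall>c x a. act x (scA c a) = scA c (act x a)) \<and>
     (\<forall>x y a. act (x * y) a = act x (act y a)) \<and>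
     (\<forall>a. act 1 a = a) \<and>
     (\<forall>h a b. act h (a * b) = sum_list (map (\<lambda>(x, y). act x a * act y b) (\<Delta> h))) \<and>
     (\<forall>h. act h 1 = scA (\<epsilon> h) 1)"

definition two_sided_ideal :: "'a::ring_1 set \<Rightarrow> bool" where
  "two_sided_ideal I \<longleftrightarrow> 0 \<in> I \<and> (\<forall>x\<in>I. \<forall>y\<in>I. x + y \<in> I) \<and> (\<forall>x\<in>I. - x \<in> I) \<and>
     (\<forall>x\<in>I. \<forall>r. r * x \<in> I \<and> x * r \<in> I)"

definition prime_ideal :: "'a::ring_1 set \<Rightarrow> bool" where
  "prime_ideal P \<longleftrightarrow> two_sided_ideal P \<and> P \<noteq> UNIV \<and>
     (\<forall>J K. two_sided_ideal J \<longrightarrow> two_sided_ideal K \<longrightarrow>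
        (\<forall>x\<in>J. \<forall>y\<in>K. x * y \<in> P) \<longrightarrow> J \<subseteq> P \<or> K \<subseteq> P)"

definition H_ideal :: "('h \<Rightarrow> 'a \<Rightarrow> 'a) \<Rightarrow> 'a::ring_1 set \<Rightarrow> bool" where
  "H_ideal act I \<longleftrightarrow> two_sided_ideal I \<and> (\<forall>h. \<forall>a\<in>I. act h a \<in> I)"

text \<open>H-ideals of A/I correspond to H-ideals of A containing I; the product of the
  images of J, K in A/I is zero iff all products x*y (x in J, y in K) lie in I.\<close>
definition H_prime :: "('h \<Rightarrow> 'a \<Rightarrow> 'a) \<Rightarrow> 'a::ring_1 set \<Rightarrow> bool" where
  "H_prime act I \<longleftrightarrow> H_ideal act I \<and> I \<noteq> UNIV \<and>
     (\<forall>J K. H_ideal act J \<longrightarrow> H_ideal act K \<longrightarrow> I \<subseteq> J \<longrightarrow> I \<subseteq> K \<longrightarrow>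
        (\<forall>x\<in>J. \<forall>y\<in>K. x * y \<in> I) \<longrightarrow> J = I \<or> K = I)"

definition colon_H :: "('h \<Rightarrow> 'a \<Rightarrow> 'a) \<Rightarrow> 'a set \<Rightarrow> 'a set" where
  "colon_H act P = {a. \<forall>h. act h a \<in> P}"

text \<open>A/P \<cong> k as k-algebras: there is a k-algebra map A \<rightarrow> k with kernel P.\<close>
definition quotient_is_k :: "('k::field \<Rightarrow> 'a::ring_1 \<Rightarrow> 'a) \<Rightarrow> 'a set \<Rightarrow> bool" where
  "quotient_is_k scA P \<longleftrightarrow> (\<exists>\<chi>. lin_fun scA \<chi> \<and> (\<forall>a b. \<chi> (a * b) = \<chi> a * \<chi> b) \<and>
      \<chi> 1 = 1 \<and> {a. \<chi> a = 0} = P)"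

text \<open>The image of a in A/P = k under the unique algebra isomorphism: the scalar c
  with a - c 1 \<in> P.\<close>
definition quot_val :: "('k::field \<Rightarrow> 'a::ring_1 \<Rightarrow> 'a) \<Rightarrow> 'a set \<Rightarrow> 'a \<Rightarrow> 'k" where
  "quot_val scA P a = (THE c. a - scA c 1 \<in> P)"

definition alpha :: "('k::field \<Rightarrow> 'a::ring_1 \<Rightarrow> 'a) \<Rightarrow> ('h \<Rightarrow> 'a \<Rightarrow> 'a) \<Rightarrow> 'a set \<Rightarrow> 'a \<Rightarrow> ('h \<Rightarrow> 'k)" where
  "alpha scA act P a = (\<lambda>h. quot_val scA P (act h a))"

text \<open>H^*: linear functionals on H, with convolution product, unit \<epsilon>, hit action.\<close>
definition convol :: "('h \<Rightarrow> ('h \<times> 'h) list) \<Rightarrow> ('h \<Rightarrow> 'k::field) \<Rightarrow> ('h \<Rightarrow> 'k) \<Rightarrow> 'h \<Rightarrow> 'k" where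
  "convol \<Delta> f g = (\<lambda>h. ev2 f g (\<Delta> h))"

definition hit :: "'h::times \<Rightarrow> ('h \<Rightarrow> 'k) \<Rightarrow> 'h \<Rightarrow> 'k" where
  "hit h f = (\<lambda>k. f (k * h))"

text \<open>Injective H-module algebra maps A/I \<rightarrow> H^*, represented as H-module algebra maps
  \<phi> : A \<rightarrow> H^* whose kernel is exactly I (kernel \<supseteq> I: well defined on A/I;
  kernel \<subseteq> I: injective on A/I).\<close>
definition embeddings ::
  "('k::field \<Rightarrow> 'h::ring_1 \<Rightarrow> 'h) \<Rightarrow> ('h \<Rightarrow> ('h \<times> 'h) list) \<Rightarrow> ('h \<Rightarrow> 'k) \<Rightarrow>
   ('k \<Rightarrow> 'a::ring_1 \<Rightarrow> 'a) \<Rightarrow> ('h \<Rightarrow> 'a \<Rightarrow> 'a) \<Rightarrow> 'a set \<Rightarrow> ('a \<Rightarrow> 'h \<Rightarrow> 'k) set" where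
  "embeddings scH \<Delta> \<epsilon> scA act I = {\<phi>.
     (\<forall>a. lin_fun scH (\<phi> a)) \<and>
     (\<forall>a b. \<phi> (a + b) = (\<lambda>h. \<phi> a h + \<phi> b h)) \<and>
     (\<forall>c a. \<phi> (scA c a) = (\<lambda>h. c * \<phi> a h)) \<and>
     (\<forall>a b. \<phi> (a * b) = convol \<Delta> (\<phi> a) (\<phi> b)) \<and>
     \<phi> 1 = \<epsilon> \<and>
     (\<forall>h a. \<phi> (act h a) = hit h (\<phi> a)) \<and>
     {a. \<phi> a = (\<lambda>_. 0)} = I}"

end

theory Submission
  imports Defs
begin

text \<open>
  A point P with A/P = k is the kernel of a character \<chi> : A \<rightarrow> k, and alpha_P is the
  map a \<mapsto> (h \<mapsto> \<chi>(h.a)); it is an H-module algebra map because the action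
  is multiplicative along \<Delta> and unital along \<epsilon>, and its kernel is P:H.
  Conversely an H-module algebra map \<phi> : A \<rightarrow> H* is determined by the character
  a \<mapsto> \<phi>(a)(1), since \<phi>(a)(h) = (h \<rightharpoonup> \<phi>(a))(1) = \<phi>(h.a)(1), so the inverse bijection
  sends \<phi> to the kernel of that character.
\<close>

definition algebra_character :: "('k::field \<Rightarrow> 'a::ring_1 \<Rightarrow> 'a) \<Rightarrow> ('a \<Rightarrow> 'k) \<Rightarrow> bool" where
  "algebra_character sc \<chi> \<longleftrightarrow> lin_fun sc \<chi> \<and> (\<forall>a b. \<chi> (a * b) = \<chi> a * \<chi> b) \<and> \<chi> 1 = 1"

lemma quotient_is_k_iff_character_kernel:
  "quotient_is_k sc P \<longleftrightarrow> (\<exists>\<chi>. algebra_character sc \<chi> \<and> P = {a. \<chi> a = 0})"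
  unfolding quotient_is_k_def algebra_character_def by auto

lemma vector_space_field_mult: "Vector_Spaces.vector_space ((*) :: 'k::field \<Rightarrow> 'k \<Rightarrow> 'k)"
  unfolding vector_space_def by (simp add: algebra_simps)

lemma lin_fun_additive: "lin_fun sc f \<Longrightarrow> additive f"
  unfolding lin_fun_def linear_iff additive_def by blast

lemma lin_fun_scale: "lin_fun sc f \<Longrightarrow> f (sc c x) = c * f x"
  unfolding lin_fun_def linear_iff by blast

lemma additive_sum_list:
  "additive f \<Longrightarrow> f (\<Sum>x\<leftarrow>xs. g x) = (\<Sum>x\<leftarrow>xs. f (g x))"
  by (induction xs) (simp_all add: additive.zero additive.add)

lemma quot_val_character_kernel:
  assumes "algebra_character sc \<chi>"
  shows "quot_val sc {a. \<chi> a = 0} = \<chi>"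
proof
  fix a
  have lin: "lin_fun sc \<chi>" and one: "\<chi> 1 = 1"
    using assms unfolding algebra_character_def by auto
  have coset: "a - sc c 1 \<in> {a. \<chi> a = 0} \<longleftrightarrow> c = \<chi> a" for c
    using one by (auto simp: additive.diff[OF lin_fun_additive[OF lin]] lin_fun_scale[OF lin])
  show "quot_val sc {a. \<chi> a = 0} a = \<chi> a"
    unfolding quot_val_def coset by simp
qed

lemma prime_ideal_character_kernel:
  assumes "algebra_character sc \<chi>"
  shows "prime_ideal {a. \<chi> a = 0}"
proof -
  have add: "additive \<chi>" and mult: "\<And>a b. \<chi> (a * b) = \<chi> a * \<chi> b" and one: "\<chi> 1 = 1"
    using assms lin_fun_additive unfolding algebra_character_def by auto
  have "two_sided_ideal {a. \<chi> a = 0}"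
    unfolding two_sided_ideal_def
    by (simp add: additive.zero[OF add] additive.add[OF add] additive.minus[OF add] mult)
  moreover have "1 \<notin> {a. \<chi> a = 0}"
    using one by simp
  moreover have "J \<subseteq> {a. \<chi> a = 0} \<or> K \<subseteq> {a. \<chi> a = 0}"
    if "\<forall>x\<in>J. \<forall>y\<in>K. x * y \<in> {a. \<chi> a = 0}" for J K
    using that by (auto simp: mult)
  ultimately show ?thesis
    unfolding prime_ideal_def by blast
qed

lemma module_algebra_linear_action:
  assumes "module_algebra scH \<Delta> \<epsilon> scA act" and "Vector_Spaces.vector_space scH"
  shows "Vector_Spaces.linear scH scA (\<lambda>h. act h a)"
  using assms unfolding module_algebra_def k_algebra_def linear_iff by auto

lemma alpha_character_kernel:
  assumes "algebra_character scA \<chi>"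
  shows "alpha scA act {a. \<chi> a = 0} = (\<lambda>a h. \<chi> (act h a))"
  unfolding alpha_def quot_val_character_kernel[OF assms] ..

lemma character_orbit_map_in_embeddings:
  assumes "Vector_Spaces.vector_space scH" and MA: "module_algebra scH \<Delta> \<epsilon> scA act"
    and \<chi>: "algebra_character scA \<chi>" and colon: "colon_H act {a. \<chi> a = 0} = I"
  shows "(\<lambda>a h. \<chi> (act h a)) \<in> embeddings scH \<Delta> \<epsilon> scA act I"
proof -
  have lin: "lin_fun scA \<chi>" and mult: "\<And>a b. \<chi> (a * b) = \<chi> a * \<chi> b" and one: "\<chi> 1 = 1"
    using \<chi> unfolding algebra_character_def by auto
  note add = additive.add[OF lin_fun_additive[OF lin]]
  note scale = lin_fun_scale[OF lin]
  have act_mult: "act h (a * b) = (\<Sum>(x, y)\<leftarrow>\<Delta> h. act x a * act y b)"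
    and act_one: "act h 1 = scA (\<epsilon> h) 1" and act_comp: "act (k * h) a = act k (act h a)"
    and act_add: "act h (a + b) = act h a + act h b" and act_scale: "act h (scA c a) = scA c (act h a)"
    for h k a b c
    using MA unfolding module_algebra_def by auto
  have "\<chi> (act h (a * b)) = (\<Sum>(x, y)\<leftarrow>\<Delta> h. \<chi> (act x a) * \<chi> (act y b))" for h a b
    unfolding act_mult additive_sum_list[OF lin_fun_additive[OF lin]]
    by (simp add: split_def mult)
  moreover have "lin_fun scH (\<lambda>h. \<chi> (act h a))" for a
    using Vector_Spaces.linear_compose[OF module_algebra_linear_action[OF MA assms(1)] lin[unfolded lin_fun_def]]
    unfolding lin_fun_def comp_def .
  moreover have "{a. (\<lambda>h. \<chi> (act h a)) = (\<lambda>_. 0)} = I"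
    unfolding colon[symmetric] colon_H_def by (simp add: fun_eq_iff)
  ultimately show ?thesis
    unfolding embeddings_def convol_def ev2_def hit_def
    by (simp add: act_one act_comp act_add act_scale add scale one)
qed

lemma embedding_apply_eq_orbit_counit:
  assumes "\<phi> \<in> embeddings scH \<Delta> \<epsilon> scA act I"
  shows "\<phi> a h = \<phi> (act h a) 1"
  using assms unfolding embeddings_def hit_def by simp

lemma embedding_counit_character:
  assumes "hopf_algebra scH \<Delta> \<epsilon> S" and "Vector_Spaces.vector_space scA"
    and \<phi>: "\<phi> \<in> embeddings scH \<Delta> \<epsilon> scA act I"
  shows "algebra_character scA (\<lambda>a. \<phi> a 1)"
proof -
  have \<Delta>_one: "tensor_eq scH (\<Delta> 1) [(1, 1)]" and \<epsilon>_one: "\<epsilon> 1 = 1"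
    using assms(1) unfolding hopf_algebra_def by auto
  have "\<phi> (a * b) 1 = ev2 (\<phi> a) (\<phi> b) (\<Delta> 1)" for a b
    using \<phi> unfolding embeddings_def convol_def by simp
  also have "ev2 (\<phi> a) (\<phi> b) (\<Delta> 1) = \<phi> a 1 * \<phi> b 1" for a b
    using \<Delta>_one \<phi> unfolding tensor_eq_def embeddings_def by (simp add: ev2_def)
  finally show ?thesis
    using assms(2) \<phi> \<epsilon>_one vector_space_field_mult
    unfolding algebra_character_def lin_fun_def embeddings_def linear_iff by simp
qed

lemma colon_H_embedding_counit_kernel:
  assumes "\<phi> \<in> embeddings scH \<Delta> \<epsilon> scA act I"
  shows "colon_H act {a. \<phi> a 1 = 0} = I"
proof -
  have "a \<in> colon_H act {a. \<phi> a 1 = 0} \<longleftrightarrow> \<phi> a = (\<lambda>_. 0)" for a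
    by (simp add: colon_H_def fun_eq_iff embedding_apply_eq_orbit_counit[OF assms, symmetric])
  then show ?thesis
    using assms unfolding embeddings_def by auto
qed

theorem proposition3p2:
  fixes scH :: "'k::field \<Rightarrow> 'h::ring_1 \<Rightarrow> 'h"
    and \<Delta> :: "'h \<Rightarrow> ('h \<times> 'h) list" and \<epsilon> :: "'h \<Rightarrow> 'k" and S :: "'h \<Rightarrow> 'h"
    and scA :: "'k \<Rightarrow> 'a::ring_1 \<Rightarrow> 'a" and act :: "'h \<Rightarrow> 'a \<Rightarrow> 'a"
    and I :: "'a set"
  assumes "hopf_algebra scH \<Delta> \<epsilon> S"
    and "bij S"
    and "module_algebra scH \<Delta> \<epsilon> scA act"
    and "H_prime act I"
  shows "bij_betw (alpha scA act)
           {P. prime_ideal P \<and> quotient_is_k scA P \<and> colon_H act P = I}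
           (embeddings scH \<Delta> \<epsilon> scA act I)"
proof -
  have vsH: "Vector_Spaces.vector_space scH" and vsA: "Vector_Spaces.vector_space scA"
    using assms(1,3) unfolding hopf_algebra_def module_algebra_def k_algebra_def by auto
  have act_unit: "act 1 a = a" for a
    using assms(3) unfolding module_algebra_def by simp
  have from_points: "alpha scA act P \<in> embeddings scH \<Delta> \<epsilon> scA act I \<and>
      {a. alpha scA act P a 1 = 0} = P"
    if point: "quotient_is_k scA P" and colon: "colon_H act P = I" for P
  proof -
    obtain \<chi> where \<chi>: "algebra_character scA \<chi>" and P: "P = {a. \<chi> a = 0}"
      using point unfolding quotient_is_k_iff_character_kernel by blast
    show ?thesis
      unfolding P alpha_character_kernel[OF \<chi>] act_unit
      using character_orbit_map_in_embeddings[OF vsH assms(3) \<chi>] colon P by simp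
  qed
  have from_embeddings: "alpha scA act {a. \<phi> a 1 = 0} = \<phi> \<and> prime_ideal {a. \<phi> a 1 = 0} \<and>
      quotient_is_k scA {a. \<phi> a 1 = 0} \<and> colon_H act {a. \<phi> a 1 = 0} = I"
    if \<phi>: "\<phi> \<in> embeddings scH \<Delta> \<epsilon> scA act I" for \<phi>
  proof -
    have \<chi>: "algebra_character scA (\<lambda>a. \<phi> a 1)"
      by (rule embedding_counit_character[OF assms(1) vsA \<phi>])
    show ?thesis
      unfolding alpha_character_kernel[OF \<chi>] embedding_apply_eq_orbit_counit[OF \<phi>, symmetric]
      using prime_ideal_character_kernel[OF \<chi>] colon_H_embedding_counit_kernel[OF \<phi>] \<chi>
      by (auto simp: quotient_is_k_iff_character_kernel)
  qed
  show ?thesis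
    by (rule bij_betw_byWitness[where f' = "\<lambda>\<phi>. {a. \<phi> a 1 = 0}"])
      (use from_points from_embeddings in auto)
qed

end
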